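(* Fix $x_1,\dots,x_V\in\mathcal X$ and a class $\mathcal G$ of functions $\mathcal X\to[\kappa]$. Let $\mathcal M$ be a set of $V\times\kappa$ matrices such that every $M\in\mathcal M$ satisfies $M_{t,k}\in[0,1]$ and $\sum_{k=1}^\kappa M_{t,k}\le1$ for all $t\in[V]$, $k\in[\kappa]$, and suppose $\mathcal M_{\mathcal G}\subseteq\mathcal M$, where $\mathcal M_{\mathcal G}=\{M_f:f\in\mathcal G\}$ with $(M_f)_{t,k}=\mathbf 1\{f(x_t)=k\}$. Then the relaxation $$\mathbf{Rel}(\mathcal G\mid y_{1:t})=\mathbb E_{\boldsymbol\epsilon_{t+1:V}}\Big[\sup_{M\in\mathcal M}\Big\{2\sum_{j=t+1}^V\sum_{k=1}^\kappa\boldsymbol\epsilon_{j,k}M_{j,k}+\sum_{i=1}^tM_{i,y_i}\Big\}\Big]-t$$ is admissible for prediction with respect to $\mathcal G$, where $\boldsymbol\epsilon_{t+1},\dots,\boldsymbol\epsilon_V\in\{-1,1\}^\kappa$ are vectors of independent Rademacher random variables and $\boldsymbol\epsilon_{j,k}$ is the $k$-th coordinate of $\boldsymbol\epsilon_j$. Moreover, the randomized strategy which at round $t$ draws $\boldsymbol\epsilon_{t+1:V}$ and predicts $\widehat y_t\sim\widehat q_t(\boldsymbol\epsilon_{t+1:V})$, where $$\widehat q_t(\boldsymbol\epsilon_{t+1:V})=\operatorname*{argmin}_{q\in\Delta([\kappa])}\ \sup_{y_t\in[\kappa]}\Big\{1-q[y_t]+\sup_{M\in\mathcal M}\Big\{2\sum_{j=t+1}^V\sum_{k=1}^\kappa\boldsymbol\epsilon_{j,k}M_{j,k}+\sum_{s=1}^tM_{s,y_s}\Big\}-t\Big\},$$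 satisfies, for every $t\in[V]$ and every $y_{1:t-1}$, $\max_{y_t\in[\kappa]}\{\mathbb E[\ell(\widehat y_t,y_t)]+\mathbf{Rel}(\mathcal G\mid y_{1:t})\}\le\mathbf{Rel}(\mathcal G\mid y_{1:t-1})$, the expectation being over $\boldsymbol\epsilon_{t+1:V}$ and $\widehat y_t$.
   Context: Notation: $[n]=\{1,\dots,n\}$, $a_{1:t}=(a_1,\dots,a_t)$, $\Delta(A)$ is the set of probability distributions on $A$, and for $q\in\Delta([\kappa])$, $q[y]$ is the probability of $y$. The loss is $\ell(\widehat y,y)=\mathbf 1\{\widehat y\ne y\}$, labels $y_t\in[\kappa]$. Admissibility: given fixed $x_{1:V}$ and a class $\mathcal G$ of functions $\mathcal X\to[\kappa]$, a collection of real functions $\mathbf{Rel}(\mathcal G\mid y_{1:t})$, $t=0,\dots,V$ (with $y_{1:0}=\emptyset$), is admissible if (i) for all $y_{1:V}$, $\mathbf{Rel}(\mathcal G\mid y_{1:V})\ge-\inf_{f\in\mathcal G}\sum_{t=1}^V\ell(f(x_t),y_t)$, and (ii) for all $t\in[V]$ and $y_{1:t-1}$, $\inf_{q\in\Delta([\kappa])}\sup_{y_t\in[\kappa]}\{\mathbb E_{\widehat y_t\sim q}\ell(\widehat y_t,y_t)+\mathbf{Rel}(\mathcal G\mid y_{1:t})\}\le \mathbf{Rel}(\mathcal G\mid y_{1:t-1})$. *)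

theory Defs
  imports Complex_Main "HOL-Library.FuncSet"
begin

definition loss :: "nat \<Rightarrow> nat \<Rightarrow> real" where
  "loss yhat y = (if yhat \<noteq> y then 1 else 0)"

definition simplex :: "nat \<Rightarrow> (nat \<Rightarrow> real) set" where
  "simplex \<kappa> = {q. (\<forall>k. 0 \<le> q k) \<and> (\<forall>k. k \<notin> {1..\<kappa>} \<longrightarrow> q k = 0)
                   \<and> (\<Sum>k\<in>{1..\<kappa>}. q k) = 1}"

definition exp_loss :: "nat \<Rightarrow> (nat \<Rightarrow> real) \<Rightarrow> nat \<Rightarrow> real" where
  "exp_loss \<kappa> q y = (\<Sum>k\<in>{1..\<kappa>}. q k * loss k y)"

text \<open>Admissibility. Label sequences y_{1:t} are lists of length t, y_i = ys ! (i-1);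
  the inputs x_1..x_V are x 1, ..., x V.\<close>
definition admissible ::
  "nat \<Rightarrow> nat \<Rightarrow> (nat \<Rightarrow> 'x) \<Rightarrow> ('x \<Rightarrow> nat) set \<Rightarrow> (nat list \<Rightarrow> real) \<Rightarrow> bool" where
  "admissible V \<kappa> x G Rel \<longleftrightarrow>
     (\<forall>ys. length ys = V \<and> set ys \<subseteq> {1..\<kappa>} \<longrightarrow>
        Rel ys \<ge> - (INF f\<in>G. (\<Sum>t\<in>{1..V}. loss (f (x t)) (ys ! (t - 1))))) \<and>
     (\<forall>t\<in>{1..V}. \<forall>ys. length ys = t - 1 \<and> set ys \<subseteq> {1..\<kappa>} \<longrightarrow>
        (INF q\<in>simplex \<kappa>. SUP yt\<in>{1..\<kappa>}. exp_loss \<kappa> q yt + Rel (ys @ [yt])) \<le> Rel ys)"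

text \<open>Sign patterns eps_{t+1:V}: eps (j,k) for j in {t+1..V}, k in {1..kappa};
  the uniform distribution on this finite set is the law of independent Rademachers.\<close>
definition rad_set :: "nat \<Rightarrow> nat \<Rightarrow> nat \<Rightarrow> (nat \<times> nat \<Rightarrow> real) set" where
  "rad_set V \<kappa> t = PiE ({Suc t..V} \<times> {1..\<kappa>}) (\<lambda>_. {-1, 1})"

definition rel_obj :: "nat \<Rightarrow> nat \<Rightarrow> (nat \<times> nat \<Rightarrow> real) \<Rightarrow> nat list \<Rightarrow> (nat \<Rightarrow> nat \<Rightarrow> real) \<Rightarrow> real" where
  "rel_obj V \<kappa> \<epsilon> ys M =
     2 * (\<Sum>j\<in>{Suc (length ys)..V}. \<Sum>k\<in>{1..\<kappa>}. \<epsilon> (j, k) * M j k)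
     + (\<Sum>i\<in>{1..length ys}. M i (ys ! (i - 1)))"

definition Rel :: "nat \<Rightarrow> nat \<Rightarrow> (nat \<Rightarrow> nat \<Rightarrow> real) set \<Rightarrow> nat list \<Rightarrow> real" where
  "Rel V \<kappa> Ms ys =
     (\<Sum>\<epsilon>\<in>rad_set V \<kappa> (length ys). (SUP M\<in>Ms. rel_obj V \<kappa> \<epsilon> ys M))
       / real (card (rad_set V \<kappa> (length ys))) - real (length ys)"

text \<open>Objective minimized by qhat_t: sup over y_t of 1 - q[y_t] + sup_M {...} - t,
  where ys = y_{1:t-1} and t = length ys + 1.\<close>
definition strat_obj :: "nat \<Rightarrow> nat \<Rightarrow> (nat \<Rightarrow> nat \<Rightarrow> real) set \<Rightarrow> nat list
    \<Rightarrow> (nat \<times> nat \<Rightarrow> real) \<Rightarrow> (nat \<Rightarrow> real) \<Rightarrow> real" where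
  "strat_obj V \<kappa> Ms ys \<epsilon> q =
     (SUP yt\<in>{1..\<kappa>}. 1 - q yt + (SUP M\<in>Ms. rel_obj V \<kappa> \<epsilon> (ys @ [yt]) M)
        - real (Suc (length ys)))"

end

theory Submission
  imports Defs
begin

text \<open>Fix the past labels and the signs of all rows after t. The relaxation objective is then
  \<open>A M + \<Sum>\<^sub>k v\<^sub>k M\<^sub>t\<^sub>,\<^sub>k\<close>, and its supremum \<open>h(v)\<close> over \<open>M\<close> is convex in \<open>v\<close>. Playing label \<open>y\<close> at
  round t contributes \<open>h(e\<^sub>y)\<close>, while the relaxation at round t - 1 averages \<open>h(2\<sigma>)\<close> over sign
  vectors \<open>\<sigma>\<close>. Admissibility therefore reduces to finding \<open>q\<close> in the simplex with
  \<open>q(y) \<ge> h(e\<^sub>y) - E h(2\<sigma>)\<close>, i.e. to \<open>\<Sum>\<^sub>y (h(e\<^sub>y) - E h(2\<sigma>))\<^sub>+ \<le> 1\<close>. By convexity, conditioning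
  on two coordinates of \<open>\<sigma>\<close> and symmetrizing gives \<open>h(e\<^sub>y - e\<^sub>y\<^sub>') + h(e\<^sub>y\<^sub>' - e\<^sub>y) \<le> 2 E h(2\<sigma>)\<close>;
  since rows of \<open>M\<close> sum to at most 1, \<open>h(e\<^sub>y)\<close> exceeds the average of \<open>h(e\<^sub>y - e\<^sub>y\<^sub>')\<close> over
  \<open>y' \<in> Y\<close> by at most \<open>1/|Y|\<close>, and summing over \<open>y \<in> Y\<close> gives the claim.
  The per-sign predictions are then averaged over the signs of the later rows; the minimizer
  \<open>q\<^sub>t\<close> does at least as well for each sign pattern.\<close>

abbreviation sign_vectors :: "nat \<Rightarrow> (nat \<Rightarrow> real) set" where
  "sign_vectors \<kappa> \<equiv> PiE {1..\<kappa>} (\<lambda>_. {-1, 1})"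

lemma card_sign_vectors_pos: "0 < real (card (sign_vectors \<kappa>))"
  by (simp add: card_PiE)

definition flip_signs :: "nat set \<Rightarrow> (nat \<Rightarrow> real) \<Rightarrow> nat \<Rightarrow> real" where
  "flip_signs F \<sigma> = (\<lambda>k. if k \<in> F then - \<sigma> k else \<sigma> k)"

lemma flip_signs_flip_signs [simp]: "flip_signs F (flip_signs F \<sigma>) = \<sigma>"
  by (auto simp: flip_signs_def)

lemma flip_signs_in_sign_vectors:
  "F \<subseteq> {1..\<kappa>} \<Longrightarrow> \<sigma> \<in> sign_vectors \<kappa> \<Longrightarrow> flip_signs F \<sigma> \<in> sign_vectors \<kappa>"
  unfolding flip_signs_def PiE_iff extensional_def by auto

lemma sum_sign_vectors_flip_signs:
  assumes "F \<subseteq> {1..\<kappa>}"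
  shows "(\<Sum>\<sigma>\<in>sign_vectors \<kappa>. f (flip_signs F \<sigma>)) = (\<Sum>\<sigma>\<in>sign_vectors \<kappa>. f \<sigma>)"
proof (rule sum.reindex_bij_witness[where i = "flip_signs F" and j = "flip_signs F"])
  fix \<sigma> assume "\<sigma> \<in> sign_vectors \<kappa>"
  then show "flip_signs F \<sigma> \<in> sign_vectors \<kappa>" by (rule flip_signs_in_sign_vectors[OF assms])
next
  fix \<sigma> assume "\<sigma> \<in> sign_vectors \<kappa>"
  then show "flip_signs F \<sigma> \<in> sign_vectors \<kappa>" by (rule flip_signs_in_sign_vectors[OF assms])
qed simp_all

lemma sum_sign_vectors_two_coords:
  fixes f :: "real \<Rightarrow> real \<Rightarrow> real"
  assumes y: "y \<in> {1..\<kappa>}" and y': "y' \<in> {1..\<kappa>}" and ne: "y \<noteq> y'"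
  shows "4 * (\<Sum>\<sigma>\<in>sign_vectors \<kappa>. f (\<sigma> y) (\<sigma> y'))
    = real (card (sign_vectors \<kappa>)) * (f 1 1 + f (-1) 1 + f 1 (-1) + f (-1) (-1))"
proof -
  let ?G = "\<lambda>\<sigma>. f (\<sigma> y) (\<sigma> y')"
  have orbit: "?G \<sigma> + ?G (flip_signs {y} \<sigma>) + ?G (flip_signs {y'} \<sigma>)
      + ?G (flip_signs {y} (flip_signs {y'} \<sigma>)) = f 1 1 + f (-1) 1 + f 1 (-1) + f (-1) (-1)"
    if "\<sigma> \<in> sign_vectors \<kappa>" for \<sigma>
  proof -
    have "\<sigma> y \<in> {-1, 1}" "\<sigma> y' \<in> {-1, 1}" using that y y' by (auto simp: PiE_iff)
    then show ?thesis using ne by (auto simp: flip_signs_def)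
  qed
  have "4 * (\<Sum>\<sigma>\<in>sign_vectors \<kappa>. ?G \<sigma>) = (\<Sum>\<sigma>\<in>sign_vectors \<kappa>. ?G \<sigma> + ?G (flip_signs {y} \<sigma>)
      + ?G (flip_signs {y'} \<sigma>) + ?G (flip_signs {y} (flip_signs {y'} \<sigma>)))"
    using sum_sign_vectors_flip_signs[of "{y}" \<kappa> ?G] sum_sign_vectors_flip_signs[of "{y'}" \<kappa> ?G]
      sum_sign_vectors_flip_signs[of "{y'}" \<kappa> "\<lambda>\<sigma>. ?G (flip_signs {y} \<sigma>)"] y y'
    by (simp add: sum.distrib)
  also have "\<dots> = card (sign_vectors \<kappa>) * (f 1 1 + f (-1) 1 + f 1 (-1) + f (-1) (-1))"
    using orbit by simp
  finally show ?thesis .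
qed

definition unit_vec :: "nat \<Rightarrow> nat \<Rightarrow> real" where
  "unit_vec y = (\<lambda>k. if k = y then 1 else 0)"

lemma sum_unit_vec_mult:
  "y \<in> {1..\<kappa>} \<Longrightarrow> (\<Sum>k\<in>{1..\<kappa>}. unit_vec y k * a k) = a y"
  unfolding unit_vec_def by (simp add: if_distrib[where f = "\<lambda>c. c * _"] cong: if_cong)

lemma mult_le_abs_of_unit_interval: "0 \<le> (b::real) \<Longrightarrow> b \<le> 1 \<Longrightarrow> a * b \<le> \<bar>a\<bar>"
proof -
  assume b: "0 \<le> b" "b \<le> 1"
  have "a * b \<le> \<bar>a\<bar> * b" using b by (intro mult_right_mono) simp_all
  also have "\<dots> \<le> \<bar>a\<bar>" using b by (intro mult_left_le) simp_all
  finally show ?thesis .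
qed

lemma simplex_dominating_exists:
  assumes "1 \<le> \<kappa>" and "(\<Sum>k\<in>{1..\<kappa>}. max 0 (b k)) \<le> 1"
  shows "\<exists>q\<in>simplex \<kappa>. \<forall>y\<in>{1..\<kappa>}. b y \<le> q y"
proof -
  define s where "s = (\<Sum>k\<in>{1..\<kappa>}. max 0 (b k))"
  define q where "q k = (if k \<in> {1..\<kappa>} then max 0 (b k) + (1 - s) / \<kappa> else 0)" for k
  have \<kappa>: "real \<kappa> > 0" using assms(1) by simp
  have slack: "0 \<le> (1 - s) / \<kappa>"
    using assms(2) \<kappa> by (simp add: s_def)
  have "(\<Sum>k\<in>{1..\<kappa>}. q k) = 1"
    using \<kappa> by (simp add: q_def sum.distrib s_def)
  then have "q \<in> simplex \<kappa>"
    using slack by (simp add: simplex_def q_def)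
  moreover have "b y \<le> q y" if "y \<in> {1..\<kappa>}" for y
    using that slack by (simp add: q_def)
  ultimately show ?thesis by blast
qed

lemma exp_loss_eq:
  assumes "q \<in> simplex \<kappa>" and "y \<in> {1..\<kappa>}"
  shows "exp_loss \<kappa> q y = 1 - q y"
proof -
  have "exp_loss \<kappa> q y = (\<Sum>k\<in>{1..\<kappa>}. q k - (if k = y then q k else 0))"
    unfolding exp_loss_def loss_def by (intro sum.cong) auto
  also have "\<dots> = 1 - q y" using assms by (simp add: simplex_def sum_subtractf)
  finally show ?thesis .
qed

lemma exp_loss_nonneg: "q \<in> simplex \<kappa> \<Longrightarrow> 0 \<le> exp_loss \<kappa> q y"
  unfolding exp_loss_def simplex_def loss_def by (auto intro!: sum_nonneg)

lemma exp_loss_mean: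
  "exp_loss \<kappa> (\<lambda>k. (\<Sum>s\<in>S. Q s k) / card S) y = (\<Sum>s\<in>S. exp_loss \<kappa> (Q s) y) / card S"
proof -
  have "(\<Sum>k\<in>{1..\<kappa>}. \<Sum>s\<in>S. Q s k * loss k y) = (\<Sum>s\<in>S. \<Sum>k\<in>{1..\<kappa>}. Q s k * loss k y)"
    by (rule sum.swap)
  then show ?thesis
    unfolding exp_loss_def
    by (simp only: sum_divide_distrib[symmetric] sum_distrib_right times_divide_eq_left)
qed

lemma simplex_mean:
  assumes "finite S" "S \<noteq> {}" "\<And>s. s \<in> S \<Longrightarrow> Q s \<in> simplex \<kappa>"
  shows "(\<lambda>k. (\<Sum>s\<in>S. Q s k) / card S) \<in> simplex \<kappa>"
proof -
  have "(\<Sum>k\<in>{1..\<kappa>}. (\<Sum>s\<in>S. Q s k) / card S) = (\<Sum>s\<in>S. \<Sum>k\<in>{1..\<kappa>}. Q s k) / card S"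
    unfolding sum_divide_distrib[symmetric] by (rule arg_cong[OF sum.swap])
  also have "\<dots> = (\<Sum>s\<in>S. 1) / card S"
    using assms(3) by (simp add: simplex_def)
  finally have "(\<Sum>k\<in>{1..\<kappa>}. (\<Sum>s\<in>S. Q s k) / card S) = 1"
    using assms(1,2) by simp
  moreover have "0 \<le> (\<Sum>s\<in>S. Q s k) / card S" for k
    using assms(3) by (auto simp: simplex_def intro!: divide_nonneg_nonneg sum_nonneg)
  ultimately show ?thesis using assms(3) by (simp add: simplex_def)
qed

locale sup_affine =
  fixes Ms :: "'m set" and A :: "'m \<Rightarrow> real" and u :: "'m \<Rightarrow> nat \<Rightarrow> real" and \<kappa> :: nat
  assumes Ms_ne: "Ms \<noteq> {}"
    and A_bdd: "bdd_above (A ` Ms)"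
    and u_range: "\<And>M k. M \<in> Ms \<Longrightarrow> k \<in> {1..\<kappa>} \<Longrightarrow> 0 \<le> u M k \<and> u M k \<le> 1"
    and u_sum: "\<And>M. M \<in> Ms \<Longrightarrow> (\<Sum>k\<in>{1..\<kappa>}. u M k) \<le> 1"
begin

definition sup_aff :: "(nat \<Rightarrow> real) \<Rightarrow> real" where
  "sup_aff v = (SUP M\<in>Ms. A M + (\<Sum>k\<in>{1..\<kappa>}. v k * u M k))"

definition rad_mean :: real where
  "rad_mean = (\<Sum>\<sigma>\<in>sign_vectors \<kappa>. sup_aff (\<lambda>k. 2 * \<sigma> k)) / card (sign_vectors \<kappa>)"

lemma bdd_above_affine: "bdd_above ((\<lambda>M. A M + (\<Sum>k\<in>{1..\<kappa>}. v k * u M k)) ` Ms)"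
proof -
  obtain B where B: "\<And>M. M \<in> Ms \<Longrightarrow> A M \<le> B"
    using A_bdd by (auto simp: bdd_above_def)
  have "A M + (\<Sum>k\<in>{1..\<kappa>}. v k * u M k) \<le> B + (\<Sum>k\<in>{1..\<kappa>}. \<bar>v k\<bar>)" if "M \<in> Ms" for M
    using B[OF that] sum_mono[of "{1..\<kappa>}" "\<lambda>k. v k * u M k" "\<lambda>k. \<bar>v k\<bar>"]
      mult_le_abs_of_unit_interval u_range[OF that] by fastforce
  then show ?thesis by (auto simp: bdd_above_def)
qed

lemma sup_aff_ge: "M \<in> Ms \<Longrightarrow> A M + (\<Sum>k\<in>{1..\<kappa>}. v k * u M k) \<le> sup_aff v"
  unfolding sup_aff_def by (rule cSUP_upper[OF _ bdd_above_affine])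

lemma sup_aff_le:
  "(\<And>M. M \<in> Ms \<Longrightarrow> A M + (\<Sum>k\<in>{1..\<kappa>}. v k * u M k) \<le> c) \<Longrightarrow> sup_aff v \<le> c"
  unfolding sup_aff_def by (rule cSUP_least[OF Ms_ne])

lemma sup_aff_cong: "(\<And>k. k \<in> {1..\<kappa>} \<Longrightarrow> v k = w k) \<Longrightarrow> sup_aff v = sup_aff w"
  unfolding sup_aff_def by (auto intro!: SUP_cong sum.cong)

lemma sup_aff_midpoint: "sup_aff (\<lambda>k. (v k + w k) / 2) \<le> (sup_aff v + sup_aff w) / 2"
proof (rule sup_aff_le)
  fix M assume M: "M \<in> Ms"
  have "A M + (\<Sum>k\<in>{1..\<kappa>}. (v k + w k) / 2 * u M k)
     = ((A M + (\<Sum>k\<in>{1..\<kappa>}. v k * u M k)) + (A M + (\<Sum>k\<in>{1..\<kappa>}. w k * u M k))) / 2"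
    by (simp add: sum.distrib sum_divide_distrib[symmetric] ring_distribs add_divide_distrib)
  also have "\<dots> \<le> (sup_aff v + sup_aff w) / 2"
    using sup_aff_ge[OF M, of v] sup_aff_ge[OF M, of w] by simp
  finally show "A M + (\<Sum>k\<in>{1..\<kappa>}. (v k + w k) / 2 * u M k) \<le> (sup_aff v + sup_aff w) / 2" .
qed

lemma sup_aff_mean:
  assumes "finite S" "S \<noteq> {}"
  shows "sup_aff (\<lambda>k. (\<Sum>s\<in>S. w s k) / card S) \<le> (\<Sum>s\<in>S. sup_aff (w s)) / card S"
proof (rule sup_aff_le)
  fix M assume M: "M \<in> Ms"
  have S: "real (card S) > 0" using assms by (simp add: card_gt_0_iff)
  have "(\<Sum>k\<in>{1..\<kappa>}. (\<Sum>s\<in>S. w s k) / card S * u M k)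
      = (\<Sum>s\<in>S. \<Sum>k\<in>{1..\<kappa>}. w s k * u M k) / card S"
    by (simp add: sum_divide_distrib sum_distrib_right) (rule sum.swap)
  then have "A M + (\<Sum>k\<in>{1..\<kappa>}. (\<Sum>s\<in>S. w s k) / card S * u M k)
      = (\<Sum>s\<in>S. A M + (\<Sum>k\<in>{1..\<kappa>}. w s k * u M k)) / card S"
    using S by (simp add: sum.distrib field_simps)
  also have "\<dots> \<le> (\<Sum>s\<in>S. sup_aff (w s)) / card S"
    by (rule divide_right_mono[OF sum_mono]) (use sup_aff_ge[OF M] in auto)
  finally show "A M + (\<Sum>k\<in>{1..\<kappa>}. (\<Sum>s\<in>S. w s k) / card S * u M k)
      \<le> (\<Sum>s\<in>S. sup_aff (w s)) / card S" .
qed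

text \<open>Averaging \<open>\<sigma>\<close> with its sign flip outside \<open>F\<close> (midpoint inequality) erases those coordinates.\<close>
lemma sup_aff_restrict_le_rad_mean:
  assumes "F \<subseteq> {1..\<kappa>}"
  shows "(\<Sum>\<sigma>\<in>sign_vectors \<kappa>. sup_aff (\<lambda>k. if k \<in> F then 2 * \<sigma> k else 0))
    \<le> (\<Sum>\<sigma>\<in>sign_vectors \<kappa>. sup_aff (\<lambda>k. 2 * \<sigma> k))"
proof -
  let ?H = "\<lambda>\<sigma>. sup_aff (\<lambda>k. 2 * \<sigma> k)"
  define Oth where "Oth = {1..\<kappa>} - F"
  have "sup_aff (\<lambda>k. if k \<in> F then 2 * \<sigma> k else 0) \<le> (?H \<sigma> + ?H (flip_signs Oth \<sigma>)) / 2" for \<sigma>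
  proof -
    have "sup_aff (\<lambda>k. if k \<in> F then 2 * \<sigma> k else 0)
        = sup_aff (\<lambda>k. (2 * \<sigma> k + 2 * flip_signs Oth \<sigma> k) / 2)"
      by (rule sup_aff_cong) (auto simp: flip_signs_def Oth_def)
    also have "\<dots> \<le> (?H \<sigma> + ?H (flip_signs Oth \<sigma>)) / 2" by (rule sup_aff_midpoint)
    finally show ?thesis .
  qed
  then have "(\<Sum>\<sigma>\<in>sign_vectors \<kappa>. sup_aff (\<lambda>k. if k \<in> F then 2 * \<sigma> k else 0))
      \<le> (\<Sum>\<sigma>\<in>sign_vectors \<kappa>. (?H \<sigma> + ?H (flip_signs Oth \<sigma>)) / 2)"
    by (rule sum_mono)
  also have "\<dots> = ((\<Sum>\<sigma>\<in>sign_vectors \<kappa>. ?H \<sigma>) + (\<Sum>\<sigma>\<in>sign_vectors \<kappa>. ?H (flip_signs Oth \<sigma>))) / 2"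
    by (simp add: sum.distrib sum_divide_distrib[symmetric])
  also have "(\<Sum>\<sigma>\<in>sign_vectors \<kappa>. ?H (flip_signs Oth \<sigma>)) = (\<Sum>\<sigma>\<in>sign_vectors \<kappa>. ?H \<sigma>)"
    by (rule sum_sign_vectors_flip_signs) (auto simp: Oth_def)
  finally show ?thesis by simp
qed

lemma sup_aff_zero_le_rad_mean: "sup_aff (\<lambda>k. 0) \<le> rad_mean"
proof -
  have "card (sign_vectors \<kappa>) * sup_aff (\<lambda>k. 0) \<le> (\<Sum>\<sigma>\<in>sign_vectors \<kappa>. sup_aff (\<lambda>k. 2 * \<sigma> k))"
    using sup_aff_restrict_le_rad_mean[of "{}"] by simp
  then show ?thesis
    unfolding rad_mean_def using card_sign_vectors_pos by (simp add: field_simps)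
qed

text \<open>Restricting \<open>\<sigma>\<close> to the coordinates \<open>y, y'\<close> leaves four equally likely sign patterns;
  two midpoint inequalities compare them with \<open>h(e\<^sub>y - e\<^sub>y\<^sub>')\<close>, \<open>h(e\<^sub>y\<^sub>' - e\<^sub>y)\<close> and \<open>h(0)\<close>.\<close>
lemma sup_aff_unit_diff_le_rad_mean:
  assumes y: "y \<in> {1..\<kappa>}" and y': "y' \<in> {1..\<kappa>}"
  shows "sup_aff (unit_vec y - unit_vec y') + sup_aff (unit_vec y' - unit_vec y) \<le> 2 * rad_mean"
proof (cases "y = y'")
  case True
  then show ?thesis using sup_aff_zero_le_rad_mean by (simp add: fun_diff_def)
next
  case ne: False
  let ?S = "sign_vectors \<kappa>"
  define g where "g a b = sup_aff (\<lambda>k. if k = y then 2 * a else if k = y' then 2 * b else 0)"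
    for a b :: real
  have "(\<Sum>\<sigma>\<in>?S. g (\<sigma> y) (\<sigma> y')) = (\<Sum>\<sigma>\<in>?S. sup_aff (\<lambda>k. if k \<in> {y, y'} then 2 * \<sigma> k else 0))"
    unfolding g_def by (intro sum.cong refl sup_aff_cong) auto
  also have "\<dots> \<le> card ?S * rad_mean"
    using sup_aff_restrict_le_rad_mean[of "{y, y'}"] y y' card_sign_vectors_pos[of \<kappa>]
    by (simp add: rad_mean_def)
  finally have "card ?S * (g 1 1 + g (-1) 1 + g 1 (-1) + g (-1) (-1)) \<le> card ?S * (4 * rad_mean)"
    using sum_sign_vectors_two_coords[OF y y' ne, of g] by linarith
  then have four: "g 1 1 + g (-1) 1 + g 1 (-1) + g (-1) (-1) \<le> 4 * rad_mean"
    using card_sign_vectors_pos[of \<kappa>] by simp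
  have "sup_aff (\<lambda>k. 0) = sup_aff (\<lambda>k. ((if k = y then 2 * 1 else if k = y' then 2 * 1 else 0)
      + (if k = y then 2 * (-1) else if k = y' then 2 * (-1) else 0)) / 2)"
    by (rule sup_aff_cong) auto
  also have "\<dots> \<le> (g 1 1 + g (-1) (-1)) / 2" unfolding g_def by (rule sup_aff_midpoint)
  finally have zero: "sup_aff (\<lambda>k. 0) \<le> (g 1 1 + g (-1) (-1)) / 2" .
  have diff: "sup_aff (unit_vec a - unit_vec b) \<le> (g s (-s) + sup_aff (\<lambda>k. 0)) / 2"
    if "a = y \<and> b = y' \<and> s = 1 \<or> a = y' \<and> b = y \<and> s = -1" for a b s
  proof -
    have "sup_aff (unit_vec a - unit_vec b) = sup_aff (\<lambda>k.
        ((if k = y then 2 * s else if k = y' then 2 * (-s) else 0) + 0) / 2)"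
      by (rule sup_aff_cong) (use that ne in \<open>auto simp: unit_vec_def\<close>)
    also have "\<dots> \<le> (g s (-s) + sup_aff (\<lambda>k. 0)) / 2" unfolding g_def by (rule sup_aff_midpoint)
    finally show ?thesis .
  qed
  show ?thesis using diff[of y y' 1] diff[of y' y "-1"] zero four by simp
qed

text \<open>The slack \<open>1 / card Y\<close> comes from the row sums of \<open>u\<close> being at most 1.\<close>
lemma sup_aff_unit_vec_le_mean_unit_diff:
  assumes Y: "Y \<subseteq> {1..\<kappa>}" and y: "y \<in> Y"
  shows "sup_aff (unit_vec y)
    \<le> sup_aff (\<lambda>k. (\<Sum>y'\<in>Y. (unit_vec y - unit_vec y') k) / card Y) + 1 / card Y"
proof (rule sup_aff_le)
  fix M assume M: "M \<in> Ms"
  define n where "n = real (card Y)"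
  have n: "n > 0" using Y y finite_subset[OF Y] by (auto simp: n_def card_gt_0_iff)
  have yK: "y \<in> {1..\<kappa>}" using y Y by auto
  have "(\<Sum>k\<in>{1..\<kappa>}. (\<Sum>y'\<in>Y. (unit_vec y - unit_vec y') k) / card Y * u M k)
      = (\<Sum>y'\<in>Y. \<Sum>k\<in>{1..\<kappa>}. unit_vec y k * u M k - unit_vec y' k * u M k) / n"
    unfolding n_def by (simp add: sum_divide_distrib sum_distrib_right left_diff_distrib)
      (rule sum.swap)
  also have "\<dots> = (\<Sum>y'\<in>Y. u M y - u M y') / n"
    using sum_unit_vec_mult[OF yK] sum_unit_vec_mult[OF subsetD[OF Y]]
    by (intro arg_cong[where f = "\<lambda>x. x / n"] sum.cong) (simp_all only: sum_subtractf)
  also have "\<dots> = u M y - (\<Sum>y'\<in>Y. u M y') / n"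
    using n by (simp add: sum_subtractf n_def field_simps)
  finally have mean_eq: "(\<Sum>k\<in>{1..\<kappa>}. (\<Sum>y'\<in>Y. (unit_vec y - unit_vec y') k) / card Y * u M k)
      = u M y - (\<Sum>y'\<in>Y. u M y') / n" .
  have "(\<Sum>y'\<in>Y. u M y') \<le> (\<Sum>k\<in>{1..\<kappa>}. u M k)"
    by (rule sum_mono2) (use Y u_range[OF M] in auto)
  then have "(\<Sum>y'\<in>Y. u M y') / n \<le> 1 / n"
    using u_sum[OF M] n by (simp add: divide_right_mono)
  then show "A M + (\<Sum>k\<in>{1..\<kappa>}. unit_vec y k * u M k)
      \<le> sup_aff (\<lambda>k. (\<Sum>y'\<in>Y. (unit_vec y - unit_vec y') k) / card Y) + 1 / card Y"
    using sup_aff_ge[OF M, of "\<lambda>k. (\<Sum>y'\<in>Y. (unit_vec y - unit_vec y') k) / card Y"]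
      mean_eq sum_unit_vec_mult[OF yK, of "u M"] unfolding n_def by linarith
qed

lemma sum_sup_aff_unit_vec_le:
  assumes Y: "Y \<subseteq> {1..\<kappa>}" "Y \<noteq> {}"
  shows "(\<Sum>y\<in>Y. sup_aff (unit_vec y)) \<le> 1 + card Y * rad_mean"
proof -
  have finY: "finite Y" using Y finite_subset by blast
  define n where "n = real (card Y)"
  have n: "n > 0" using Y finY by (simp add: n_def card_gt_0_iff)
  have "(\<Sum>y\<in>Y. sup_aff (unit_vec y)) \<le> (\<Sum>y\<in>Y. (\<Sum>y'\<in>Y. sup_aff (unit_vec y - unit_vec y')) / n + 1 / n)"
  proof (rule sum_mono)
    fix y assume "y \<in> Y"
    then show "sup_aff (unit_vec y) \<le> (\<Sum>y'\<in>Y. sup_aff (unit_vec y - unit_vec y')) / n + 1 / n"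
      using sup_aff_unit_vec_le_mean_unit_diff[OF Y(1)]
        sup_aff_mean[OF finY Y(2), of "\<lambda>y'. unit_vec y - unit_vec y'"]
      unfolding n_def by fastforce
  qed
  also have "\<dots> = (\<Sum>y\<in>Y. \<Sum>y'\<in>Y. sup_aff (unit_vec y - unit_vec y')) / n + 1"
    using n by (simp add: sum.distrib sum_divide_distrib[symmetric] n_def)
  also have "(\<Sum>y\<in>Y. \<Sum>y'\<in>Y. sup_aff (unit_vec y - unit_vec y')) \<le> n * n * rad_mean"
  proof -
    have "2 * (\<Sum>y\<in>Y. \<Sum>y'\<in>Y. sup_aff (unit_vec y - unit_vec y'))
        = (\<Sum>y\<in>Y. \<Sum>y'\<in>Y. sup_aff (unit_vec y - unit_vec y') + sup_aff (unit_vec y' - unit_vec y))"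
      using sum.swap[of "\<lambda>y y'. sup_aff (unit_vec y' - unit_vec y)" Y Y] by (simp add: sum.distrib)
    also have "\<dots> \<le> (\<Sum>y\<in>Y. \<Sum>y'\<in>Y. 2 * rad_mean)"
      by (intro sum_mono sup_aff_unit_diff_le_rad_mean) (use Y in auto)
    finally show ?thesis by (simp add: n_def)
  qed
  finally show ?thesis using n by (simp add: divide_right_mono n_def)
qed

lemma sum_pos_part_sup_aff_unit_vec_le_one:
  "(\<Sum>y\<in>{1..\<kappa>}. max 0 (sup_aff (unit_vec y) - rad_mean)) \<le> 1"
proof -
  define Y where "Y = {y \<in> {1..\<kappa>}. rad_mean < sup_aff (unit_vec y)}"
  have "(\<Sum>y\<in>{1..\<kappa>}. max 0 (sup_aff (unit_vec y) - rad_mean))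
      = (\<Sum>y\<in>Y. sup_aff (unit_vec y) - rad_mean)"
    by (rule sum.mono_neutral_cong_right) (auto simp: Y_def)
  also have "\<dots> \<le> 1"
  proof (cases "Y = {}")
    case False
    have "Y \<subseteq> {1..\<kappa>}" by (auto simp: Y_def)
    then show ?thesis
      using sum_sup_aff_unit_vec_le[OF _ False] by (simp add: sum_subtractf)
  qed simp
  finally show ?thesis .
qed

end

definition merge_row :: "nat \<Rightarrow> (nat \<Rightarrow> real) \<Rightarrow> (nat \<times> nat \<Rightarrow> real) \<Rightarrow> nat \<times> nat \<Rightarrow> real" where
  "merge_row t \<sigma> \<epsilon> = (\<lambda>(j, k). if j = t then \<sigma> k else \<epsilon> (j, k))"

lemma merge_row_in_rad_set:
  assumes "n < V" "\<epsilon> \<in> rad_set V \<kappa> (Suc n)" "\<sigma> \<in> sign_vectors \<kappa>"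
  shows "merge_row (Suc n) \<sigma> \<epsilon> \<in> rad_set V \<kappa> n"
  using assms unfolding rad_set_def merge_row_def PiE_iff extensional_def
  by (auto simp: not_less_eq_eq le_Suc_eq)

definition split_row :: "nat \<Rightarrow> (nat \<times> nat \<Rightarrow> real) \<Rightarrow> (nat \<times> nat \<Rightarrow> real) \<times> (nat \<Rightarrow> real)" where
  "split_row t \<epsilon> = (\<lambda>(j, k). if j = t then undefined else \<epsilon> (j, k), \<lambda>k. \<epsilon> (t, k))"

lemma bij_betw_merge_row:
  assumes "n < V"
  shows "bij_betw (\<lambda>(\<epsilon>, \<sigma>). merge_row (Suc n) \<sigma> \<epsilon>)
    (rad_set V \<kappa> (Suc n) \<times> sign_vectors \<kappa>) (rad_set V \<kappa> n)"
proof (rule bij_betw_byWitness[where f' = "split_row (Suc n)"])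
  show "\<forall>a\<in>rad_set V \<kappa> (Suc n) \<times> sign_vectors \<kappa>.
      split_row (Suc n) ((\<lambda>(\<epsilon>, \<sigma>). merge_row (Suc n) \<sigma> \<epsilon>) a) = a"
    by (auto simp: rad_set_def merge_row_def split_row_def PiE_iff extensional_def fun_eq_iff)
  show "\<forall>a\<in>rad_set V \<kappa> n. (\<lambda>(\<epsilon>, \<sigma>). merge_row (Suc n) \<sigma> \<epsilon>) (split_row (Suc n) a) = a"
    by (auto simp: rad_set_def merge_row_def split_row_def PiE_iff extensional_def fun_eq_iff)
  show "(\<lambda>(\<epsilon>, \<sigma>). merge_row (Suc n) \<sigma> \<epsilon>) ` (rad_set V \<kappa> (Suc n) \<times> sign_vectors \<kappa>) \<subseteq> rad_set V \<kappa> n"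
    using merge_row_in_rad_set[OF assms] by auto
  show "split_row (Suc n) ` rad_set V \<kappa> n \<subseteq> rad_set V \<kappa> (Suc n) \<times> sign_vectors \<kappa>"
  proof (rule image_subsetI)
    fix \<epsilon> assume \<epsilon>: "\<epsilon> \<in> rad_set V \<kappa> n"
    have in_range: "Suc n \<le> j \<and> j \<le> V \<and> k \<in> {1..\<kappa>}" if "\<epsilon> (j, k) \<noteq> undefined" for j k
      using \<epsilon> that by (auto simp: rad_set_def PiE_iff extensional_def)
    show "split_row (Suc n) \<epsilon> \<in> rad_set V \<kappa> (Suc n) \<times> sign_vectors \<kappa>"
      using \<epsilon> assms
      by (auto simp: split_row_def rad_set_def PiE_iff extensional_def dest!: in_range)
  qed
qed

lemma mean_rad_set_split:
  assumes "n < V"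
  shows "(\<Sum>\<epsilon>\<in>rad_set V \<kappa> n. F \<epsilon>) / card (rad_set V \<kappa> n)
    = (\<Sum>\<epsilon>\<in>rad_set V \<kappa> (Suc n). (\<Sum>\<sigma>\<in>sign_vectors \<kappa>. F (merge_row (Suc n) \<sigma> \<epsilon>))
        / card (sign_vectors \<kappa>)) / card (rad_set V \<kappa> (Suc n))"
proof -
  note bij = bij_betw_merge_row[OF assms, of \<kappa>]
  have "(\<Sum>\<epsilon>\<in>rad_set V \<kappa> n. F \<epsilon>)
      = (\<Sum>\<epsilon>\<in>rad_set V \<kappa> (Suc n). \<Sum>\<sigma>\<in>sign_vectors \<kappa>. F (merge_row (Suc n) \<sigma> \<epsilon>))"
    unfolding sum.reindex_bij_betw[OF bij, symmetric] sum.cartesian_product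
    by (rule sum.cong) auto
  moreover have "card (rad_set V \<kappa> n) = card (rad_set V \<kappa> (Suc n)) * card (sign_vectors \<kappa>)"
    using bij_betw_same_card[OF bij] by (simp add: card_cartesian_product)
  ultimately show ?thesis by (simp add: sum_divide_distrib mult.commute)
qed

definition sup_rel :: "nat \<Rightarrow> nat \<Rightarrow> (nat \<Rightarrow> nat \<Rightarrow> real) set \<Rightarrow> (nat \<times> nat \<Rightarrow> real) \<Rightarrow> nat list \<Rightarrow> real" where
  "sup_rel V \<kappa> Ms \<epsilon> ys = (SUP M\<in>Ms. rel_obj V \<kappa> \<epsilon> ys M)"

definition next_row_mean ::
    "nat \<Rightarrow> nat \<Rightarrow> (nat \<Rightarrow> nat \<Rightarrow> real) set \<Rightarrow> (nat \<times> nat \<Rightarrow> real) \<Rightarrow> nat list \<Rightarrow> real" where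
  "next_row_mean V \<kappa> Ms \<epsilon> ys =
     (\<Sum>\<sigma>\<in>sign_vectors \<kappa>. sup_rel V \<kappa> Ms (merge_row (Suc (length ys)) \<sigma> \<epsilon>) ys)
       / card (sign_vectors \<kappa>)"

definition frozen_obj :: "nat \<Rightarrow> nat \<Rightarrow> (nat \<times> nat \<Rightarrow> real) \<Rightarrow> nat list \<Rightarrow> (nat \<Rightarrow> nat \<Rightarrow> real) \<Rightarrow> real" where
  "frozen_obj V \<kappa> \<epsilon> ys M =
     2 * (\<Sum>j\<in>{Suc (Suc (length ys))..V}. \<Sum>k\<in>{1..\<kappa>}. \<epsilon> (j, k) * M j k)
     + (\<Sum>i\<in>{1..length ys}. M i (ys ! (i - 1)))"

lemma rel_obj_snoc:
  "rel_obj V \<kappa> \<epsilon> (ys @ [y]) M = frozen_obj V \<kappa> \<epsilon> ys M + M (Suc (length ys)) y"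
proof -
  have "(\<Sum>i\<in>{1..length ys}. M i ((ys @ [y]) ! (i - 1))) = (\<Sum>i\<in>{1..length ys}. M i (ys ! (i - 1)))"
    by (rule sum.cong) (auto simp: nth_append)
  then show ?thesis unfolding rel_obj_def frozen_obj_def by simp
qed

lemma rel_obj_merge_row:
  assumes "length ys < V"
  shows "rel_obj V \<kappa> (merge_row (Suc (length ys)) \<sigma> \<epsilon>) ys M
    = frozen_obj V \<kappa> \<epsilon> ys M + (\<Sum>k\<in>{1..\<kappa>}. 2 * \<sigma> k * M (Suc (length ys)) k)"
proof -
  let ?t = "Suc (length ys)"
  have "(\<Sum>j\<in>{Suc ?t..V}. \<Sum>k\<in>{1..\<kappa>}. merge_row ?t \<sigma> \<epsilon> (j, k) * M j k)
      = (\<Sum>j\<in>{Suc ?t..V}. \<Sum>k\<in>{1..\<kappa>}. \<epsilon> (j, k) * M j k)"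
    by (rule sum.cong) (auto simp: merge_row_def)
  then have "(\<Sum>j\<in>{?t..V}. \<Sum>k\<in>{1..\<kappa>}. merge_row ?t \<sigma> \<epsilon> (j, k) * M j k)
      = (\<Sum>k\<in>{1..\<kappa>}. \<sigma> k * M ?t k) + (\<Sum>j\<in>{Suc ?t..V}. \<Sum>k\<in>{1..\<kappa>}. \<epsilon> (j, k) * M j k)"
    using assms by (simp add: sum.atLeast_Suc_atMost merge_row_def del: sum.cl_ivl_Suc)
  then show ?thesis
    unfolding rel_obj_def frozen_obj_def by (simp add: sum_distrib_left algebra_simps)
qed

lemma Rel_eq_mean_next_row_mean:
  assumes "length ys < V"
  shows "Rel V \<kappa> Ms ys = (\<Sum>\<epsilon>\<in>rad_set V \<kappa> (Suc (length ys)). next_row_mean V \<kappa> Ms \<epsilon> ys)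
    / card (rad_set V \<kappa> (Suc (length ys))) - length ys"
  unfolding Rel_def next_row_mean_def sup_rel_def
  using mean_rad_set_split[OF assms, where \<kappa> = \<kappa> and F = "\<lambda>\<epsilon>. SUP M\<in>Ms. rel_obj V \<kappa> \<epsilon> ys M"] by simp

lemma Rel_snoc_le:
  assumes "length ys < V"
    and "\<And>\<epsilon>. \<epsilon> \<in> rad_set V \<kappa> (Suc (length ys)) \<Longrightarrow>
      a \<epsilon> + sup_rel V \<kappa> Ms \<epsilon> (ys @ [y]) \<le> 1 + next_row_mean V \<kappa> Ms \<epsilon> ys"
  shows "(\<Sum>\<epsilon>\<in>rad_set V \<kappa> (Suc (length ys)). a \<epsilon>) / card (rad_set V \<kappa> (Suc (length ys)))
    + Rel V \<kappa> Ms (ys @ [y]) \<le> Rel V \<kappa> Ms ys"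
proof -
  let ?R = "rad_set V \<kappa> (Suc (length ys))"
  have R: "real (card ?R) > 0" by (simp add: rad_set_def card_PiE)
  have "(\<Sum>\<epsilon>\<in>?R. a \<epsilon>) + (\<Sum>\<epsilon>\<in>?R. sup_rel V \<kappa> Ms \<epsilon> (ys @ [y]))
      \<le> card ?R + (\<Sum>\<epsilon>\<in>?R. next_row_mean V \<kappa> Ms \<epsilon> ys)"
    using sum_mono[of ?R "\<lambda>\<epsilon>. a \<epsilon> + sup_rel V \<kappa> Ms \<epsilon> (ys @ [y])"
        "\<lambda>\<epsilon>. 1 + next_row_mean V \<kappa> Ms \<epsilon> ys"] assms(2)
    by (simp add: sum.distrib)
  then have "((\<Sum>\<epsilon>\<in>?R. a \<epsilon>) + (\<Sum>\<epsilon>\<in>?R. sup_rel V \<kappa> Ms \<epsilon> (ys @ [y]))) / card ?R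
      \<le> (card ?R + (\<Sum>\<epsilon>\<in>?R. next_row_mean V \<kappa> Ms \<epsilon> ys)) / card ?R"
    using R by (intro divide_right_mono) auto
  then have "(\<Sum>\<epsilon>\<in>?R. a \<epsilon>) / card ?R + (\<Sum>\<epsilon>\<in>?R. sup_rel V \<kappa> Ms \<epsilon> (ys @ [y])) / card ?R
      \<le> 1 + (\<Sum>\<epsilon>\<in>?R. next_row_mean V \<kappa> Ms \<epsilon> ys) / card ?R"
    using R by (simp add: add_divide_distrib)
  then show ?thesis
    unfolding Rel_eq_mean_next_row_mean[OF assms(1)] by (simp add: Rel_def sup_rel_def)
qed

lemma nth_label_in_range:
  assumes "set ys \<subseteq> {1..\<kappa>}" and "t \<in> {1..length ys}"
  shows "ys ! (t - 1) \<in> {1..\<kappa>}"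
proof -
  have "ys ! (t - 1) \<in> set ys" using assms(2) by auto
  then show ?thesis using assms(1) by blast
qed

locale matrix_class =
  fixes V \<kappa> :: nat and Ms :: "(nat \<Rightarrow> nat \<Rightarrow> real) set"
  assumes kappa_pos: "1 \<le> \<kappa>"
    and Ms_ne: "Ms \<noteq> {}"
    and M_entries: "\<forall>M\<in>Ms. \<forall>t\<in>{1..V}. \<forall>k\<in>{1..\<kappa>}. 0 \<le> M t k \<and> M t k \<le> 1"
    and M_rows: "\<forall>M\<in>Ms. \<forall>t\<in>{1..V}. (\<Sum>k\<in>{1..\<kappa>}. M t k) \<le> 1"
begin

lemma sum_label_entries_le:
  assumes "M \<in> Ms" "n \<le> V" "set ys \<subseteq> {1..\<kappa>}" "length ys = n"
  shows "(\<Sum>i\<in>{1..n}. M i (ys ! (i - 1))) \<le> n"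
proof -
  have "M i (ys ! (i - 1)) \<le> 1" if "i \<in> {1..n}" for i
  proof -
    have "ys ! (i - 1) \<in> {1..\<kappa>}" using nth_label_in_range assms(3,4) that by blast
    then show ?thesis using that assms(1,2) M_entries by auto
  qed
  then have "(\<Sum>i\<in>{1..n}. M i (ys ! (i - 1))) \<le> (\<Sum>i\<in>{1..n}. 1)" by (rule sum_mono)
  then show ?thesis by simp
qed

lemma sup_affine_frozen_obj:
  assumes "length ys < V" "set ys \<subseteq> {1..\<kappa>}"
  shows "sup_affine Ms (frozen_obj V \<kappa> \<epsilon> ys) (\<lambda>M k. M (Suc (length ys)) k) \<kappa>"
proof
  let ?E = "\<Sum>j\<in>{Suc (Suc (length ys))..V}. \<Sum>k\<in>{1..\<kappa>}. \<bar>\<epsilon> (j, k)\<bar>"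
  show "bdd_above (frozen_obj V \<kappa> \<epsilon> ys ` Ms)"
  proof (rule bdd_aboveI2)
    fix M assume M: "M \<in> Ms"
    have "(\<Sum>j\<in>{Suc (Suc (length ys))..V}. \<Sum>k\<in>{1..\<kappa>}. \<epsilon> (j, k) * M j k) \<le> ?E"
      by (intro sum_mono mult_le_abs_of_unit_interval) (use M M_entries in auto)
    moreover have "(\<Sum>i\<in>{1..length ys}. M i (ys ! (i - 1))) \<le> length ys"
      using sum_label_entries_le[OF M less_imp_le[OF assms(1)] assms(2) refl] .
    ultimately show "frozen_obj V \<kappa> \<epsilon> ys M \<le> 2 * ?E + length ys"
      unfolding frozen_obj_def by linarith
  qed
  show "Ms \<noteq> {}" by (rule Ms_ne)
  show "0 \<le> M (Suc (length ys)) k \<and> M (Suc (length ys)) k \<le> 1" if "M \<in> Ms" "k \<in> {1..\<kappa>}" for M k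
    using M_entries that assms(1) by simp
  show "(\<Sum>k\<in>{1..\<kappa>}. M (Suc (length ys)) k) \<le> 1" if "M \<in> Ms" for M
    using M_rows that assms(1) by simp
qed

lemma exists_round_prediction:
  assumes "length ys < V" "set ys \<subseteq> {1..\<kappa>}"
  shows "\<exists>q\<in>simplex \<kappa>. \<forall>y\<in>{1..\<kappa>}.
    exp_loss \<kappa> q y + sup_rel V \<kappa> Ms \<epsilon> (ys @ [y]) \<le> 1 + next_row_mean V \<kappa> Ms \<epsilon> ys"
proof -
  interpret sup_affine Ms "frozen_obj V \<kappa> \<epsilon> ys" "\<lambda>M k. M (Suc (length ys)) k" \<kappa>
    by (rule sup_affine_frozen_obj[OF assms])
  have unit: "sup_aff (unit_vec y) = sup_rel V \<kappa> Ms \<epsilon> (ys @ [y])" if "y \<in> {1..\<kappa>}" for y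
    unfolding sup_aff_def sup_rel_def rel_obj_snoc sum_unit_vec_mult[OF that] ..
  have rad: "rad_mean = next_row_mean V \<kappa> Ms \<epsilon> ys"
    using assms(1) unfolding rad_mean_def next_row_mean_def sup_aff_def sup_rel_def
    by (simp add: rel_obj_merge_row mult.assoc)
  obtain q where q: "q \<in> simplex \<kappa>" and q_ge: "\<forall>y\<in>{1..\<kappa>}. sup_aff (unit_vec y) - rad_mean \<le> q y"
    using simplex_dominating_exists[OF kappa_pos sum_pos_part_sup_aff_unit_vec_le_one] by blast
  show ?thesis
  proof (intro bexI ballI)
    fix y assume y: "y \<in> {1..\<kappa>}"
    show "exp_loss \<kappa> q y + sup_rel V \<kappa> Ms \<epsilon> (ys @ [y]) \<le> 1 + next_row_mean V \<kappa> Ms \<epsilon> ys"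
      using bspec[OF q_ge y] exp_loss_eq[OF q y] unit[OF y] rad by linarith
  qed (rule q)
qed

lemma neg_INF_loss_le_Rel:
  fixes x :: "nat \<Rightarrow> 'x" and G :: "('x \<Rightarrow> nat) set"
  assumes G_ne: "G \<noteq> {}"
    and MG_sub: "\<forall>f\<in>G. \<exists>M\<in>Ms. \<forall>t\<in>{1..V}. \<forall>k\<in>{1..\<kappa>}. M t k = (if f (x t) = k then 1 else 0)"
    and ys: "length ys = V" "set ys \<subseteq> {1..\<kappa>}"
  shows "- (INF f\<in>G. \<Sum>t\<in>{1..V}. loss (f (x t)) (ys ! (t - 1))) \<le> Rel V \<kappa> Ms ys"
proof -
  let ?score = "\<lambda>M. \<Sum>t\<in>{1..V}. M t (ys ! (t - 1))"
  have "rad_set V \<kappa> (length ys) = {\<lambda>_. undefined}" using ys by (simp add: rad_set_def)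
  then have Rel_eq: "Rel V \<kappa> Ms ys = (SUP M\<in>Ms. ?score M) - V"
    using ys by (simp add: Rel_def rel_obj_def)
  have label: "ys ! (t - 1) \<in> {1..\<kappa>}" if "t \<in> {1..V}" for t
    using nth_label_in_range ys that by blast
  have "- Rel V \<kappa> Ms ys \<le> (\<Sum>t\<in>{1..V}. loss (f (x t)) (ys ! (t - 1)))" if f: "f \<in> G" for f
  proof -
    obtain M where M: "M \<in> Ms"
      and M_f: "\<forall>t\<in>{1..V}. \<forall>k\<in>{1..\<kappa>}. M t k = (if f (x t) = k then 1 else 0)"
      using MG_sub f by blast
    have "(\<Sum>t\<in>{1..V}. loss (f (x t)) (ys ! (t - 1))) = (\<Sum>t\<in>{1..V}. 1 - M t (ys ! (t - 1)))"
      by (rule sum.cong) (use M_f label in \<open>auto simp: loss_def\<close>)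
    moreover have "?score M \<le> (SUP M\<in>Ms. ?score M)"
      by (rule cSUP_upper[OF M bdd_aboveI2]) (use sum_label_entries_le ys in auto)
    ultimately show ?thesis unfolding Rel_eq by (simp add: sum_subtractf)
  qed
  then have "- Rel V \<kappa> Ms ys \<le> (INF f\<in>G. \<Sum>t\<in>{1..V}. loss (f (x t)) (ys ! (t - 1)))"
    by (rule cINF_greatest[OF G_ne])
  then show ?thesis by simp
qed

lemma INF_SUP_le_Rel:
  assumes ys: "length ys < V" "set ys \<subseteq> {1..\<kappa>}"
  shows "(INF q\<in>simplex \<kappa>. SUP y\<in>{1..\<kappa>}. exp_loss \<kappa> q y + Rel V \<kappa> Ms (ys @ [y]))
    \<le> Rel V \<kappa> Ms ys"
proof -
  let ?R = "rad_set V \<kappa> (Suc (length ys))"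
  let ?f = "\<lambda>q. SUP y\<in>{1..\<kappa>}. exp_loss \<kappa> q y + Rel V \<kappa> Ms (ys @ [y])"
  have "\<forall>\<epsilon>. \<exists>q. q \<in> simplex \<kappa> \<and> (\<forall>y\<in>{1..\<kappa>}.
      exp_loss \<kappa> q y + sup_rel V \<kappa> Ms \<epsilon> (ys @ [y]) \<le> 1 + next_row_mean V \<kappa> Ms \<epsilon> ys)"
    using exists_round_prediction[OF ys] by blast
  then obtain Q where Q: "\<And>\<epsilon>. Q \<epsilon> \<in> simplex \<kappa>" and Q_le: "\<And>\<epsilon> y. y \<in> {1..\<kappa>} \<Longrightarrow>
      exp_loss \<kappa> (Q \<epsilon>) y + sup_rel V \<kappa> Ms \<epsilon> (ys @ [y]) \<le> 1 + next_row_mean V \<kappa> Ms \<epsilon> ys"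
    by metis
  define q where "q k = (\<Sum>\<epsilon>\<in>?R. Q \<epsilon> k) / card ?R" for k
  have "?R \<noteq> {}" by (simp add: rad_set_def PiE_eq_empty_iff)
  then have q: "q \<in> simplex \<kappa>"
    unfolding q_def by (intro simplex_mean Q) (simp_all add: rad_set_def finite_PiE)
  have "exp_loss \<kappa> q y + Rel V \<kappa> Ms (ys @ [y]) \<le> Rel V \<kappa> Ms ys" if "y \<in> {1..\<kappa>}" for y
    unfolding q_def exp_loss_mean by (rule Rel_snoc_le[OF ys(1) Q_le[OF that]])
  then have "?f q \<le> Rel V \<kappa> Ms ys"
    using kappa_pos by (intro cSUP_least) auto
  moreover have "bdd_below (?f ` simplex \<kappa>)"
  proof (rule bdd_belowI2)
    fix p assume "p \<in> simplex \<kappa>"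
    then have "Rel V \<kappa> Ms (ys @ [1]) \<le> exp_loss \<kappa> p 1 + Rel V \<kappa> Ms (ys @ [1])"
      by (simp add: exp_loss_nonneg)
    also have "\<dots> \<le> ?f p"
      using kappa_pos by (intro cSUP_upper bdd_above_finite) auto
    finally show "Rel V \<kappa> Ms (ys @ [1]) \<le> ?f p" .
  qed
  ultimately show ?thesis using cINF_lower[OF _ q, of ?f] by linarith
qed

text \<open>Against the prediction built in \<open>exists_round_prediction\<close>, each term of
  \<open>strat_obj\<close> is at most \<open>1 + next_row_mean - t\<close>; the minimizer \<open>q\<^sub>t\<close> can only do better.\<close>
lemma strategy_le_Rel:
  assumes ys: "length ys < V" "set ys \<subseteq> {1..\<kappa>}" and y: "y \<in> {1..\<kappa>}"
    and qhat: "\<forall>\<epsilon>\<in>rad_set V \<kappa> (Suc (length ys)). qhat \<epsilon> \<in> simplex \<kappa> \<and>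
      (\<forall>q\<in>simplex \<kappa>. strat_obj V \<kappa> Ms ys \<epsilon> (qhat \<epsilon>) \<le> strat_obj V \<kappa> Ms ys \<epsilon> q)"
  shows "(\<Sum>\<epsilon>\<in>rad_set V \<kappa> (Suc (length ys)). exp_loss \<kappa> (qhat \<epsilon>) y)
      / card (rad_set V \<kappa> (Suc (length ys))) + Rel V \<kappa> Ms (ys @ [y]) \<le> Rel V \<kappa> Ms ys"
proof (rule Rel_snoc_le[OF ys(1)])
  fix \<epsilon> assume \<epsilon>: "\<epsilon> \<in> rad_set V \<kappa> (Suc (length ys))"
  have strat_obj_eq: "strat_obj V \<kappa> Ms ys \<epsilon> p
      = (SUP y\<in>{1..\<kappa>}. 1 - p y + sup_rel V \<kappa> Ms \<epsilon> (ys @ [y]) - Suc (length ys))" for p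
    by (simp add: strat_obj_def sup_rel_def)
  obtain q where q: "q \<in> simplex \<kappa>" and q_le: "\<forall>y\<in>{1..\<kappa>}.
      exp_loss \<kappa> q y + sup_rel V \<kappa> Ms \<epsilon> (ys @ [y]) \<le> 1 + next_row_mean V \<kappa> Ms \<epsilon> ys"
    using exists_round_prediction[OF ys] by blast
  have "1 - qhat \<epsilon> y + sup_rel V \<kappa> Ms \<epsilon> (ys @ [y]) - Suc (length ys) \<le> strat_obj V \<kappa> Ms ys \<epsilon> (qhat \<epsilon>)"
    unfolding strat_obj_eq by (intro cSUP_upper[OF y] bdd_above_finite) simp
  also have "\<dots> \<le> strat_obj V \<kappa> Ms ys \<epsilon> q" using qhat \<epsilon> q by blast
  also have "\<dots> \<le> 1 + next_row_mean V \<kappa> Ms \<epsilon> ys - Suc (length ys)"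
    unfolding strat_obj_eq using kappa_pos q_le exp_loss_eq[OF q]
    by (intro cSUP_least) fastforce+
  finally show "exp_loss \<kappa> (qhat \<epsilon>) y + sup_rel V \<kappa> Ms \<epsilon> (ys @ [y]) \<le> 1 + next_row_mean V \<kappa> Ms \<epsilon> ys"
    using exp_loss_eq[OF _ y] qhat \<epsilon> by simp
qed


lemma admissible_Rel:
  fixes x :: "nat \<Rightarrow> 'x" and G :: "('x \<Rightarrow> nat) set"
  assumes G_ne: "G \<noteq> {}"
    and MG_sub: "\<forall>f\<in>G. \<exists>M\<in>Ms. \<forall>t\<in>{1..V}. \<forall>k\<in>{1..\<kappa>}. M t k = (if f (x t) = k then 1 else 0)"
  shows "admissible V \<kappa> x G (Rel V \<kappa> Ms)"
  unfolding admissible_def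
proof (intro conjI allI impI ballI)
  fix ys :: "nat list" assume "length ys = V \<and> set ys \<subseteq> {1..\<kappa>}"
  then show "- (INF f\<in>G. \<Sum>t\<in>{1..V}. loss (f (x t)) (ys ! (t - 1))) \<le> Rel V \<kappa> Ms ys"
    using neg_INF_loss_le_Rel[OF G_ne MG_sub] by blast
next
  fix t ys assume "t \<in> {1..V}" "length ys = t - 1 \<and> set ys \<subseteq> {1..\<kappa>}"
  then show "(INF q\<in>simplex \<kappa>. SUP y\<in>{1..\<kappa>}. exp_loss \<kappa> q y + Rel V \<kappa> Ms (ys @ [y]))
      \<le> Rel V \<kappa> Ms ys"
    using INF_SUP_le_Rel by auto
qed

lemma Max_strategy_le_Rel:
  assumes t: "t \<in> {1..V}" "length ys = t - 1" and ys: "set ys \<subseteq> {1..\<kappa>}"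
    and qhat: "\<forall>\<epsilon>\<in>rad_set V \<kappa> t. qhat \<epsilon> \<in> simplex \<kappa> \<and>
      (\<forall>q\<in>simplex \<kappa>. strat_obj V \<kappa> Ms ys \<epsilon> (qhat \<epsilon>) \<le> strat_obj V \<kappa> Ms ys \<epsilon> q)"
  shows "Max ((\<lambda>y. (\<Sum>\<epsilon>\<in>rad_set V \<kappa> t. exp_loss \<kappa> (qhat \<epsilon>) y) / real (card (rad_set V \<kappa> t))
      + Rel V \<kappa> Ms (ys @ [y])) ` {1..\<kappa>}) \<le> Rel V \<kappa> Ms ys"
proof (rule Max.boundedI)
  have t_eq: "t = Suc (length ys)" and "length ys < V" using t by auto
  fix r assume "r \<in> (\<lambda>y. (\<Sum>\<epsilon>\<in>rad_set V \<kappa> t. exp_loss \<kappa> (qhat \<epsilon>) y) / real (card (rad_set V \<kappa> t))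
      + Rel V \<kappa> Ms (ys @ [y])) ` {1..\<kappa>}"
  then obtain y where "y \<in> {1..\<kappa>}" and "r = (\<Sum>\<epsilon>\<in>rad_set V \<kappa> t. exp_loss \<kappa> (qhat \<epsilon>) y)
      / real (card (rad_set V \<kappa> t)) + Rel V \<kappa> Ms (ys @ [y])" by blast
  then show "r \<le> Rel V \<kappa> Ms ys"
    using strategy_le_Rel[OF \<open>length ys < V\<close> ys] qhat unfolding t_eq by blast
qed (use kappa_pos in auto)

end

theorem lemma2:
  fixes V \<kappa> :: nat and x :: "nat \<Rightarrow> 'x" and G :: "('x \<Rightarrow> nat) set"
    and Ms :: "(nat \<Rightarrow> nat \<Rightarrow> real) set"
  assumes kappa_pos: "1 \<le> \<kappa>"
    and G_range: "\<forall>f\<in>G. \<forall>z. f z \<in> {1..\<kappa>}"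
    and G_ne: "G \<noteq> {}"
    and M_entries: "\<forall>M\<in>Ms. \<forall>t\<in>{1..V}. \<forall>k\<in>{1..\<kappa>}. 0 \<le> M t k \<and> M t k \<le> 1"
    and M_rows: "\<forall>M\<in>Ms. \<forall>t\<in>{1..V}. (\<Sum>k\<in>{1..\<kappa>}. M t k) \<le> 1"
    and MG_sub: "\<forall>f\<in>G. \<exists>M\<in>Ms. \<forall>t\<in>{1..V}. \<forall>k\<in>{1..\<kappa>}.
                    M t k = (if f (x t) = k then 1 else 0)"
  shows "admissible V \<kappa> x G (Rel V \<kappa> Ms) \<and>
    (\<forall>t\<in>{1..V}. \<forall>ys. length ys = t - 1 \<and> set ys \<subseteq> {1..\<kappa>} \<longrightarrow>
      (\<forall>qhat. (\<forall>\<epsilon>\<in>rad_set V \<kappa> t. qhat \<epsilon> \<in> simplex \<kappa> \<and>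
                 (\<forall>q\<in>simplex \<kappa>. strat_obj V \<kappa> Ms ys \<epsilon> (qhat \<epsilon>) \<le> strat_obj V \<kappa> Ms ys \<epsilon> q)) \<longrightarrow>
        Max ((\<lambda>yt. (\<Sum>\<epsilon>\<in>rad_set V \<kappa> t. exp_loss \<kappa> (qhat \<epsilon>) yt) / real (card (rad_set V \<kappa> t))
                   + Rel V \<kappa> Ms (ys @ [yt])) ` {1..\<kappa>})
          \<le> Rel V \<kappa> Ms ys))"
proof -
  interpret matrix_class V \<kappa> Ms
    using kappa_pos G_ne MG_sub M_entries M_rows by unfold_locales auto
  show ?thesis
    using admissible_Rel[OF G_ne MG_sub] Max_strategy_le_Rel by blast
qed

end
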